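(* For every integer $n\ge1$ and every $f:\{0,1\}^n\times\{0,1\}^n\to\{0,1\}$, $$\log_2\chi^{\mathrm{geom}}(f)\;\le\; C^{\mathrm{comp}}(f)\;\le\; 2\lceil\log_2\chi^{\mathrm{geom}}(f)\rceil .$$ In particular $C^{\mathrm{comp}}(f)=\Theta(\log\chi^{\mathrm{geom}}(f))$ with absolute implied constants.
   Context: Order $\{0,1\}^n$ lexicographically (equivalently, by the integer with that binary representation). A geometric rectangle is a subset of $\{0,1\}^n\times\{0,1\}^n$ of the form $[a_1,a_2]\times[b_1,b_2]$, where $[a_1,a_2]=\{a: a_1\le a\le a_2\}$ is an interval in this order. It is $f$-monochromatic if $f$ is constant on it. $\chi^{\mathrm{geom}}(f)$ is the minimum number of nonempty $f$-monochromatic geometric rectangles in a partition of $\{0,1\}^n\times\{0,1\}^n$. For $x\in\{0,1\}^n$, $\theta_x(y)=1$ iff $y\ge x$. A comparison communication protocol is a rooted binary tree each of whose internal vertices $v$ is assigned to either Alice or Bob and labeled by a function $g_v:\{0,1\}^n\to\{0,1\}$ which is either some $\theta_{x_v}$ or the constant $0$ function, with outgoing edges labeled $0$ and $1$; leaves are labeled by outputs in $\{0,1\}$. On input $(a,b)$ one starts at the root and at each internal vertex $v$ follows the edge labeled $g_v(a)$ if $v$ is Alice's and $g_v(b)$ if $v$ is Bob's. The protocol computes $f$ if the leaf reached on every input is labeled $f(a,b)$. Its cost is its depth; $C^{\mathrm{comp}}(f)$ is the minimum cost of a comparison communication protocol computing $f$. *)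

theory Defs
  imports Complex_Main
begin

text \<open>Strings in {0,1}^n are identified with the integers 0..2^n-1 they
represent in binary; the lexicographic order is then the usual order on nat.\<close>

definition cube :: "nat \<Rightarrow> nat set" where
  "cube n = {0..<2^n}"

definition geom_rect :: "nat \<Rightarrow> (nat \<times> nat) set \<Rightarrow> bool" where
  "geom_rect n R \<longleftrightarrow> (\<exists>a1 a2 b1 b2. a1 \<le> a2 \<and> a2 < 2^n \<and> b1 \<le> b2 \<and> b2 < 2^n
       \<and> R = {a1..a2} \<times> {b1..b2})"

definition monochromatic :: "(nat \<Rightarrow> nat \<Rightarrow> bool) \<Rightarrow> (nat \<times> nat) set \<Rightarrow> bool" where
  "monochromatic f R \<longleftrightarrow> (\<exists>c. \<forall>(a,b)\<in>R. f a b = c)"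

definition geom_partition :: "nat \<Rightarrow> (nat \<Rightarrow> nat \<Rightarrow> bool) \<Rightarrow> (nat \<times> nat) set set \<Rightarrow> bool" where
  "geom_partition n f P \<longleftrightarrow> finite P
     \<and> (\<forall>R\<in>P. R \<noteq> {} \<and> geom_rect n R \<and> monochromatic f R)
     \<and> (\<forall>R\<in>P. \<forall>S\<in>P. R \<noteq> S \<longrightarrow> R \<inter> S = {})
     \<and> \<Union>P = cube n \<times> cube n"

definition chi_geom :: "nat \<Rightarrow> (nat \<Rightarrow> nat \<Rightarrow> bool) \<Rightarrow> nat" where
  "chi_geom n f = (LEAST k. \<exists>P. geom_partition n f P \<and> card P = k)"

text \<open>A node's function is either theta_x (Some x) or the
constant 0 function (None). The first subtree is the 0-edge, the second the 1-edge.
Outputs 0/1 are represented by False/True.\<close>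
datatype player = Alice | Bob

datatype protocol = Leaf bool | Node player "nat option" protocol protocol

fun gval :: "nat option \<Rightarrow> nat \<Rightarrow> bool" where
  "gval None y = False"
| "gval (Some x) y = (x \<le> y)"

fun run :: "protocol \<Rightarrow> nat \<Rightarrow> nat \<Rightarrow> bool" where
  "run (Leaf c) a b = c"
| "run (Node p g t0 t1) a b =
     (if gval g (case p of Alice \<Rightarrow> a | Bob \<Rightarrow> b) then run t1 a b else run t0 a b)"

fun depth :: "protocol \<Rightarrow> nat" where
  "depth (Leaf c) = 0"
| "depth (Node p g t0 t1) = Suc (max (depth t0) (depth t1))"

fun wf_protocol :: "nat \<Rightarrow> protocol \<Rightarrow> bool" where
  "wf_protocol n (Leaf c) = True"
| "wf_protocol n (Node p g t0 t1) =
     ((\<forall>x. g = Some x \<longrightarrow> x < 2^n) \<and> wf_protocol n t0 \<and> wf_protocol n t1)"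

definition computes :: "nat \<Rightarrow> protocol \<Rightarrow> (nat \<Rightarrow> nat \<Rightarrow> bool) \<Rightarrow> bool" where
  "computes n T f \<longleftrightarrow> wf_protocol n T \<and> (\<forall>a\<in>cube n. \<forall>b\<in>cube n. run T a b = f a b)"

definition C_comp :: "nat \<Rightarrow> (nat \<Rightarrow> nat \<Rightarrow> bool) \<Rightarrow> nat" where
  "C_comp n f = (LEAST d. \<exists>T. computes n T f \<and> depth T = d)"

end

theory Submission
  imports Defs
begin

(*
  A comparison protocol of depth d splits the square into at most 2^d leaf regions. Every
  query compares one coordinate with a threshold, so each region is a product of two
  intervals, and the output of the protocol is constant on it; hence chi_geom <= 2^C_comp.

  Conversely, let P be a partition into at most 2^c monochromatic rectangles. Alice binary
  searches for the largest left edge t <= a of a rectangle of P, then Bob for the largest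
  lower edge u <= b (c queries each), and the leaf outputs f t u. If (a, b) lies in the
  rectangle [a1,a2] x [b1,b2] of P, then a1 <= t <= a and b1 <= u <= b, so (t, u) lies in
  the same rectangle and f t u = f a b.
*)

section \<open>Binary search protocols\<close>

lemma list_halving_induct [case_names Nil single halve]:
  assumes "P []" and "\<And>x. P [x]"
    and "\<And>xs. 2 \<le> length xs \<Longrightarrow> P (take (length xs div 2) xs)
           \<Longrightarrow> P (drop (length xs div 2) xs) \<Longrightarrow> P xs"
  shows "P xs"
proof (induction xs rule: length_induct)
  case (1 xs)
  show ?case
  proof (cases xs rule: remdups_adj.cases)
    case (3 x y zs)
    then show ?thesis using 1 assms(3) by simp
  qed (use assms in auto)
qed

lemma sorted_append_le_in_left:
  assumes "sorted (l @ r)" and "r \<noteq> []" and "t \<in> set (l @ r)" and "t \<le> v" and "\<not> hd r \<le> v"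
  shows "t \<in> set l"
proof (rule ccontr)
  assume "t \<notin> set l"
  then have "t \<in> set r"
    using assms(3) by simp
  then have "hd r \<le> t"
    using assms(1,2) by (cases r) (auto simp: sorted_append)
  with assms(4,5) show False
    by simp
qed

lemma Max_le_append_sorted:
  fixes v :: "'a::linorder"
  assumes "sorted (l @ r)" and "r \<noteq> []" and "hd r \<le> v"
  shows "Max {t \<in> set (l @ r). t \<le> v} = Max {t \<in> set r. t \<le> v}"
proof -
  let ?M = "Max {t \<in> set r. t \<le> v}"
  have hd_r: "hd r \<in> {t \<in> set r. t \<le> v}"
    using assms(2,3) by simp
  then have M: "?M \<in> {t \<in> set r. t \<le> v}"
    by (intro Max_in) auto
  have "hd r \<le> ?M"
    using hd_r by simp
  have "y \<le> ?M" if "y \<in> set (l @ r)" "y \<le> v" for y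
  proof (cases "y \<in> set l")
    case True
    then have "y \<le> hd r"
      using assms(1) hd_r by (auto simp: sorted_append)
    with \<open>hd r \<le> ?M\<close> show ?thesis by simp
  next
    case False
    then show ?thesis using that by simp
  qed
  with M show ?thesis
    by (intro Max_eqI) auto
qed

lemma Max_predecessor_bounds:
  fixes A :: "'a::linorder set"
  assumes "finite A" and "x \<in> A" and "x \<le> a"
  shows "x \<le> Max {t \<in> A. t \<le> a}" and "Max {t \<in> A. t \<le> a} \<le> a"
proof -
  have "Max {t \<in> A. t \<le> a} \<in> {t \<in> A. t \<le> a}"
    using assms by (intro Max_in) auto
  then show "Max {t \<in> A. t \<le> a} \<le> a"
    by simp
  show "x \<le> Max {t \<in> A. t \<le> a}"
    using assms by (intro Max_ge) auto
qed

(* The empty list never occurs in the protocols built below; its leaf is arbitrary. *)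
function search :: "player \<Rightarrow> nat list \<Rightarrow> (nat \<Rightarrow> protocol) \<Rightarrow> protocol" where
  "search p [] k = Leaf False"
| "search p [x] k = k x"
| "search p (x # y # zs) k =
     (let xs = x # y # zs; h = length xs div 2
      in Node p (Some (xs ! h)) (search p (take h xs) k) (search p (drop h xs) k))"
  by pat_completeness auto
termination
  by (relation "measure (\<lambda>(p, xs, k). length xs)") auto

lemma search_halve:
  assumes "2 \<le> length xs"
  shows "search p xs k = Node p (Some (xs ! (length xs div 2)))
     (search p (take (length xs div 2) xs) k) (search p (drop (length xs div 2) xs) k)"
proof -
  obtain x y zs where "xs = x # y # zs"
    using assms by (metis Suc_le_length_iff numeral_2_eq_2)
  then show ?thesis by (simp only: search.simps Let_def)
qed

abbreviation player_input :: "player \<Rightarrow> nat \<Rightarrow> nat \<Rightarrow> nat" where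
  "player_input p a b \<equiv> case p of Alice \<Rightarrow> a | Bob \<Rightarrow> b"

lemma depth_search:
  assumes "length xs \<le> 2 ^ c" and "\<forall>t\<in>set xs. depth (k t) \<le> D"
  shows "depth (search p xs k) \<le> c + D"
  using assms
proof (induction xs arbitrary: c rule: list_halving_induct)
  case (halve xs)
  then obtain c' where c: "c = Suc c'"
    by (cases c) auto
  have "length (take (length xs div 2) xs) \<le> 2 ^ c'" "length (drop (length xs div 2) xs) \<le> 2 ^ c'"
    using halve.prems(1) c by auto
  with halve show ?case
    by (force simp: search_halve c dest: in_set_takeD in_set_dropD)
qed auto

lemma wf_search:
  assumes "\<forall>t\<in>set xs. t < 2 ^ n" and "\<forall>t\<in>set xs. wf_protocol n (k t)"
  shows "wf_protocol n (search p xs k)"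
  using assms
proof (induction xs rule: list_halving_induct)
  case (halve xs)
  then show ?case
    by (auto simp: search_halve dest: in_set_takeD in_set_dropD)
qed auto

lemma run_search:
  assumes "sorted xs" and "\<exists>t\<in>set xs. t \<le> player_input p a b"
  shows "run (search p xs k) a b = run (k (Max {t \<in> set xs. t \<le> player_input p a b})) a b"
  using assms
proof (induction xs rule: list_halving_induct)
  case Nil
  then show ?case by simp
next
  case (single x)
  then have "{t \<in> set [x]. t \<le> player_input p a b} = {x}" by auto
  then show ?case by simp
next
  case (halve xs)
  define v where "v = player_input p a b"
  define l where "l = take (length xs div 2) xs"
  define r where "r = drop (length xs div 2) xs"
  have xs: "xs = l @ r" and "r \<noteq> []"
    using halve.hyps by (auto simp: l_def r_def)
  have "xs ! (length xs div 2) = hd r"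
    using \<open>r \<noteq> []\<close> by (simp add: r_def hd_drop_conv_nth)
  then have run_xs: "run (search p xs k) a b =
      (if hd r \<le> v then run (search p r k) a b else run (search p l k) a b)"
    by (cases p) (simp_all add: search_halve[OF halve.hyps] flip: l_def r_def add: v_def)
  have "sorted l" "sorted r"
    using halve.prems(1) xs by (simp_all add: sorted_append)
  show ?case
  proof (cases "hd r \<le> v")
    case True
    then have "\<exists>t\<in>set r. t \<le> v"
      using \<open>r \<noteq> []\<close> hd_in_set by blast
    then have "run (search p r k) a b = run (k (Max {t \<in> set r. t \<le> v})) a b"
      using halve.IH(2) \<open>sorted r\<close> unfolding r_def v_def by blast
    then show ?thesis
      using True run_xs Max_le_append_sorted[of l r v] halve.prems(1) \<open>r \<noteq> []\<close>
      by (simp add: xs v_def)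
  next
    case False
    then have below_v: "{t \<in> set xs. t \<le> v} = {t \<in> set l. t \<le> v}"
      using sorted_append_le_in_left[of l r] halve.prems(1) \<open>r \<noteq> []\<close> by (auto simp: xs)
    then have "\<exists>t\<in>set l. t \<le> v"
      using halve.prems(2) by (auto simp: v_def)
    then have "run (search p l k) a b = run (k (Max {t \<in> set l. t \<le> v})) a b"
      using halve.IH(1) \<open>sorted l\<close> unfolding l_def v_def by blast
    then show ?thesis
      using False run_xs below_v by (simp add: v_def)
  qed
qed

section \<open>Leaf rectangles of a protocol\<close>

definition query_set :: "player \<Rightarrow> nat option \<Rightarrow> bool \<Rightarrow> (nat \<times> nat) set" where
  "query_set p g c = {(a, b). gval g (player_input p a b) = c}"

fun leaf_rects :: "protocol \<Rightarrow> (nat \<times> nat) set \<Rightarrow> (nat \<times> nat) set set" where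
  "leaf_rects (Leaf c) R = {R}"
| "leaf_rects (Node p g t0 t1) R =
     leaf_rects t0 (R \<inter> query_set p g False) \<union> leaf_rects t1 (R \<inter> query_set p g True)"

lemma finite_leaf_rects: "finite (leaf_rects T R)"
  by (induction T arbitrary: R) auto

lemma card_leaf_rects_le: "card (leaf_rects T R) \<le> 2 ^ depth T"
proof (induction T arbitrary: R)
  case (Node p g t0 t1)
  let ?d = "max (depth t0) (depth t1)"
  have "card (leaf_rects (Node p g t0 t1) R)
      \<le> card (leaf_rects t0 (R \<inter> query_set p g False)) + card (leaf_rects t1 (R \<inter> query_set p g True))"
    unfolding leaf_rects.simps by (rule card_Un_le)
  also have "\<dots> \<le> 2 ^ depth t0 + 2 ^ depth t1"
    by (intro add_mono Node.IH)
  also have "\<dots> \<le> 2 ^ ?d + 2 ^ ?d"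
    by (intro add_mono power_increasing) simp_all
  finally show ?case by simp
qed simp

lemma Union_leaf_rects: "\<Union> (leaf_rects T R) = R"
  by (induction T arbitrary: R) (auto simp: query_set_def)

lemma leaf_rects_subset: "S \<in> leaf_rects T R \<Longrightarrow> S \<subseteq> R"
  using Union_leaf_rects by blast

lemma leaf_rects_NodeE:
  assumes "S \<in> leaf_rects (Node p g t0 t1) R"
  obtains c where "S \<in> leaf_rects (if c then t1 else t0) (R \<inter> query_set p g c)"
  using assms by (metis (full_types) UnE leaf_rects.simps(2))

lemma leaf_rects_disjoint:
  "S \<in> leaf_rects T R \<Longrightarrow> S' \<in> leaf_rects T R \<Longrightarrow> S \<noteq> S' \<Longrightarrow> S \<inter> S' = {}"
proof (induction T arbitrary: R)
  case (Node p g t0 t1)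
  obtain c c' where S: "S \<in> leaf_rects (if c then t1 else t0) (R \<inter> query_set p g c)"
    and S': "S' \<in> leaf_rects (if c' then t1 else t0) (R \<inter> query_set p g c')"
    using Node.prems(1,2) by (metis leaf_rects_NodeE)
  show ?case
  proof (cases "c = c'")
    case True
    then show ?thesis
      using S S' Node.IH Node.prems(3) by (cases c) auto
  next
    case False
    then have "query_set p g c \<inter> query_set p g c' = {}"
      by (auto simp: query_set_def)
    then show ?thesis
      using leaf_rects_subset[OF S] leaf_rects_subset[OF S'] by blast
  qed
qed simp

lemma run_Node_query_set:
  "(a, b) \<in> query_set p g c \<Longrightarrow> run (Node p g t0 t1) a b = run (if c then t1 else t0) a b"
  by (auto simp: query_set_def)

lemma run_eq_on_leaf_rect:
  "S \<in> leaf_rects T R \<Longrightarrow> (a, b) \<in> S \<Longrightarrow> (a', b') \<in> S \<Longrightarrow> run T a b = run T a' b'"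
proof (induction T arbitrary: R)
  case (Node p g t0 t1)
  obtain c where S: "S \<in> leaf_rects (if c then t1 else t0) (R \<inter> query_set p g c)"
    using Node.prems(1) by (rule leaf_rects_NodeE)
  then have "(a, b) \<in> query_set p g c" "(a', b') \<in> query_set p g c"
    using leaf_rects_subset Node.prems(2,3) by blast+
  then have "run (Node p g t0 t1) a b = run (if c then t1 else t0) a b"
    and "run (Node p g t0 t1) a' b' = run (if c then t1 else t0) a' b'"
    by (simp_all only: run_Node_query_set)
  moreover have "run (if c then t1 else t0) a b = run (if c then t1 else t0) a' b'"
  proof (cases c)
    case True
    then show ?thesis using S Node.IH(2)[OF _ Node.prems(2,3)] by simp
  next
    case False
    then show ?thesis using S Node.IH(1)[OF _ Node.prems(2,3)] by simp
  qed
  ultimately show ?case by simp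
qed simp

definition box :: "(nat \<times> nat) set \<Rightarrow> bool" where
  "box R \<longleftrightarrow> (\<exists>a1 a2 b1 b2. R = {a1..a2} \<times> {b1..b2})"

lemma interval_filter_gval: "\<exists>l' u'. {x \<in> {l..u}. gval g x = c} = {l'..u'}"
proof -
  consider "g = None" "c" | "g = None" "\<not> c" | y where "g = Some y" "c"
    | "g = Some 0" "\<not> c" | y where "g = Some y" "y > 0" "\<not> c"
    by (metis gr0I not_Some_eq)
  then show ?thesis
  proof cases
    case 1
    then have "{x \<in> {l..u}. gval g x = c} = {1..0}" by auto
    then show ?thesis by blast
  next
    case 2
    then have "{x \<in> {l..u}. gval g x = c} = {l..u}" by auto
    then show ?thesis by blast
  next
    case (3 y)
    then have "{x \<in> {l..u}. gval g x = c} = {max l y..u}" by auto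
    then show ?thesis by blast
  next
    case 4
    then have "{x \<in> {l..u}. gval g x = c} = {1..0}" by auto
    then show ?thesis by blast
  next
    case (5 y)
    then have "{x \<in> {l..u}. gval g x = c} = {l..min u (y - 1)}" by auto
    then show ?thesis by blast
  qed
qed

lemma box_Int_query_set:
  assumes "box R"
  shows "box (R \<inter> query_set p g c)"
proof -
  obtain a1 a2 b1 b2 where R: "R = {a1..a2} \<times> {b1..b2}"
    using assms by (auto simp: box_def)
  show ?thesis
  proof (cases p)
    case Alice
    obtain l u where lu: "{x \<in> {a1..a2}. gval g x = c} = {l..u}"
      using interval_filter_gval by blast
    have "R \<inter> query_set p g c = {x \<in> {a1..a2}. gval g x = c} \<times> {b1..b2}"
      using Alice by (auto simp: R query_set_def)
    then show ?thesis
      unfolding lu box_def by blast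
  next
    case Bob
    obtain l u where lu: "{x \<in> {b1..b2}. gval g x = c} = {l..u}"
      using interval_filter_gval by blast
    have "R \<inter> query_set p g c = {a1..a2} \<times> {x \<in> {b1..b2}. gval g x = c}"
      using Bob by (auto simp: R query_set_def)
    then show ?thesis
      unfolding lu box_def by blast
  qed
qed

lemma box_leaf_rects: "box R \<Longrightarrow> S \<in> leaf_rects T R \<Longrightarrow> box S"
proof (induction T arbitrary: R)
  case (Node p g t0 t1)
  obtain c where S: "S \<in> leaf_rects (if c then t1 else t0) (R \<inter> query_set p g c)"
    using Node.prems(2) by (rule leaf_rects_NodeE)
  moreover have "box (R \<inter> query_set p g c)"
    using Node.prems(1) by (rule box_Int_query_set)
  ultimately show ?case
    using Node.IH by (cases c) simp_all
qed simp

section \<open>From protocols to geometric partitions\<close>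

lemma box_cube: "box (cube n \<times> cube n)"
proof -
  have "(2::nat) ^ n = Suc (2 ^ n - 1)"
    by simp
  then have "cube n = {0..2 ^ n - 1}"
    unfolding cube_def by (metis atLeastLessThanSuc_atLeastAtMost)
  then show ?thesis unfolding box_def by blast
qed

lemma geom_rectI:
  assumes "box R" and "R \<noteq> {}" and "R \<subseteq> cube n \<times> cube n"
  shows "geom_rect n R"
proof -
  obtain a1 a2 b1 b2 where R: "R = {a1..a2} \<times> {b1..b2}"
    using assms(1) by (auto simp: box_def)
  then have "a1 \<le> a2" "b1 \<le> b2" and "(a2, b2) \<in> R"
    using assms(2) by auto
  moreover from this have "a2 < 2 ^ n" "b2 < 2 ^ n"
    using assms(3) by (auto simp: cube_def)
  ultimately show ?thesis
    unfolding geom_rect_def using R by blast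
qed

(* Unreachable leaves give empty regions, which a partition may not contain. *)
lemma geom_partition_leaf_rects:
  assumes "computes n T f"
  shows "geom_partition n f (leaf_rects T (cube n \<times> cube n) - {{}})"
    (is "geom_partition n f ?P")
proof -
  have rect: "R \<noteq> {} \<and> geom_rect n R \<and> monochromatic f R" if "R \<in> ?P" for R
  proof -
    have leaf: "R \<in> leaf_rects T (cube n \<times> cube n)" and "R \<noteq> {}"
      using that by auto
    have sub: "R \<subseteq> cube n \<times> cube n"
      using leaf by (rule leaf_rects_subset)
    obtain a0 b0 where "(a0, b0) \<in> R"
      using \<open>R \<noteq> {}\<close> by auto
    have "f a b = f a0 b0" if "(a, b) \<in> R" for a b
      using run_eq_on_leaf_rect[OF leaf that \<open>(a0, b0) \<in> R\<close>] that \<open>(a0, b0) \<in> R\<close> sub assms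
      by (auto simp: computes_def)
    then have "monochromatic f R"
      by (auto simp: monochromatic_def)
    moreover have "geom_rect n R"
      using box_leaf_rects[OF box_cube leaf] \<open>R \<noteq> {}\<close> sub by (rule geom_rectI)
    ultimately show ?thesis
      using \<open>R \<noteq> {}\<close> by blast
  qed
  have "\<Union> ?P = cube n \<times> cube n"
    using Union_leaf_rects[of T "cube n \<times> cube n"] by blast
  with rect show ?thesis
    unfolding geom_partition_def using finite_leaf_rects leaf_rects_disjoint by blast
qed

lemma chi_geom_le_card: "geom_partition n f P \<Longrightarrow> chi_geom n f \<le> card P"
  unfolding chi_geom_def by (rule Least_le) blast

lemma chi_geom_le_exp_depth:
  assumes "computes n T f"
  shows "chi_geom n f \<le> 2 ^ depth T"
proof -
  have "chi_geom n f \<le> card (leaf_rects T (cube n \<times> cube n) - {{}})"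
    using geom_partition_leaf_rects[OF assms] by (rule chi_geom_le_card)
  also have "\<dots> \<le> card (leaf_rects T (cube n \<times> cube n))"
    by (intro card_mono finite_leaf_rects) blast
  also have "\<dots> \<le> 2 ^ depth T"
    by (rule card_leaf_rects_le)
  finally show ?thesis .
qed

section \<open>From geometric partitions to protocols\<close>

lemma monochromatic_eq:
  "monochromatic f R \<Longrightarrow> (a, b) \<in> R \<Longrightarrow> (a', b') \<in> R \<Longrightarrow> f a b = f a' b'"
  unfolding monochromatic_def by (metis (mono_tags, lifting) case_prodD)

lemma geom_rect_cornerE:
  assumes "geom_rect n R"
  obtains a1 a2 b1 b2 where "a1 \<le> a2" "a2 < 2 ^ n" "b1 \<le> b2" "b2 < 2 ^ n"
    and "R = {a1..a2} \<times> {b1..b2}" and "Min (fst ` R) = a1" and "Min (snd ` R) = b1"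
proof -
  obtain a1 a2 b1 b2 where "a1 \<le> a2" "a2 < 2 ^ n" "b1 \<le> b2" "b2 < 2 ^ n"
    and R: "R = {a1..a2} \<times> {b1..b2}"
    using assms by (auto simp: geom_rect_def)
  moreover from this have "fst ` R = {a1..a2}" "snd ` R = {b1..b2}"
    by auto
  ultimately have "Min (fst ` R) = a1" "Min (snd ` R) = b1"
    by (auto intro!: Min_eqI)
  then show ?thesis
    by (rule that[OF \<open>a1 \<le> a2\<close> \<open>a2 < 2 ^ n\<close> \<open>b1 \<le> b2\<close> \<open>b2 < 2 ^ n\<close> R])
qed

definition left_edges :: "(nat \<times> nat) set set \<Rightarrow> nat set" where
  "left_edges P = (\<lambda>R. Min (fst ` R)) ` P"

definition lower_edges :: "(nat \<times> nat) set set \<Rightarrow> nat set" where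
  "lower_edges P = (\<lambda>R. Min (snd ` R)) ` P"

definition corner_protocol :: "(nat \<Rightarrow> nat \<Rightarrow> bool) \<Rightarrow> (nat \<times> nat) set set \<Rightarrow> protocol" where
  "corner_protocol f P = search Alice (sorted_list_of_set (left_edges P))
     (\<lambda>t. search Bob (sorted_list_of_set (lower_edges P)) (\<lambda>u. Leaf (f t u)))"

lemma depth_corner_protocol:
  assumes "finite P" and "card P \<le> 2 ^ c"
  shows "depth (corner_protocol f P) \<le> 2 * c"
proof -
  have "card (left_edges P) \<le> 2 ^ c" "card (lower_edges P) \<le> 2 ^ c"
    unfolding left_edges_def lower_edges_def
    using order_trans[OF card_image_le[OF \<open>finite P\<close>] assms(2)] by simp_all
  then have "depth (search Bob (sorted_list_of_set (lower_edges P)) (\<lambda>u. Leaf (f t u))) \<le> c + 0" for t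
    by (intro depth_search) auto
  with \<open>card (left_edges P) \<le> 2 ^ c\<close> have "depth (corner_protocol f P) \<le> c + (c + 0)"
    unfolding corner_protocol_def by (intro depth_search) auto
  then show ?thesis by simp
qed

lemma wf_corner_protocol:
  assumes "geom_partition n f P"
  shows "wf_protocol n (corner_protocol f P)"
proof -
  have "finite P" and rect: "\<And>R. R \<in> P \<Longrightarrow> geom_rect n R"
    using assms by (auto simp: geom_partition_def)
  have "Min (fst ` R) < 2 ^ n" "Min (snd ` R) < 2 ^ n" if "R \<in> P" for R
    using rect[OF that] by (auto elim!: geom_rect_cornerE)
  then have "\<forall>t\<in>left_edges P. t < 2 ^ n" "\<forall>u\<in>lower_edges P. u < 2 ^ n"
    by (auto simp: left_edges_def lower_edges_def)
  moreover have "finite (left_edges P)" "finite (lower_edges P)"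
    using \<open>finite P\<close> by (simp_all add: left_edges_def lower_edges_def)
  ultimately show ?thesis
    unfolding corner_protocol_def by (simp add: wf_search)
qed

lemma run_corner_protocol:
  assumes "finite P" and "\<exists>t\<in>left_edges P. t \<le> a" and "\<exists>u\<in>lower_edges P. u \<le> b"
  shows "run (corner_protocol f P) a b
    = f (Max {t \<in> left_edges P. t \<le> a}) (Max {u \<in> lower_edges P. u \<le> b})"
proof -
  have "finite (left_edges P)" "finite (lower_edges P)"
    using \<open>finite P\<close> by (simp_all add: left_edges_def lower_edges_def)
  with assms(2,3) show ?thesis
    unfolding corner_protocol_def by (simp add: run_search)
qed

lemma corner_protocol_computes:
  assumes P: "geom_partition n f P"
  shows "computes n (corner_protocol f P) f"
proof -
  have "finite P" and rect: "\<And>R. R \<in> P \<Longrightarrow> geom_rect n R \<and> monochromatic f R"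
    and cover: "\<Union> P = cube n \<times> cube n"
    using P by (auto simp: geom_partition_def)
  have "finite (left_edges P)" "finite (lower_edges P)"
    using \<open>finite P\<close> by (simp_all add: left_edges_def lower_edges_def)
  have "run (corner_protocol f P) a b = f a b" if "a \<in> cube n" "b \<in> cube n" for a b
  proof -
    have "(a, b) \<in> \<Union> P"
      using cover that by simp
    then obtain R where "R \<in> P" and ab: "(a, b) \<in> R"
      by blast
    then have "geom_rect n R" and mono: "monochromatic f R"
      using rect by blast+
    then obtain a1 a2 b1 b2 where R: "R = {a1..a2} \<times> {b1..b2}"
      and a1: "Min (fst ` R) = a1" and b1: "Min (snd ` R) = b1"
      by (elim geom_rect_cornerE)
    have "a1 \<in> left_edges P" "b1 \<in> lower_edges P"
      using \<open>R \<in> P\<close> unfolding left_edges_def lower_edges_def a1[symmetric] b1[symmetric] by simp_all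
    moreover have "a1 \<le> a" "b1 \<le> b"
      using ab R by auto
    ultimately have "run (corner_protocol f P) a b
        = f (Max {t \<in> left_edges P. t \<le> a}) (Max {u \<in> lower_edges P. u \<le> b})"
      using \<open>finite P\<close> by (intro run_corner_protocol) auto
    also have "\<dots> = f a b"
    proof (rule monochromatic_eq[OF mono _ ab])
      show "(Max {t \<in> left_edges P. t \<le> a}, Max {u \<in> lower_edges P. u \<le> b}) \<in> R"
        using Max_predecessor_bounds[OF \<open>finite (left_edges P)\<close> \<open>a1 \<in> left_edges P\<close> \<open>a1 \<le> a\<close>]
          Max_predecessor_bounds[OF \<open>finite (lower_edges P)\<close> \<open>b1 \<in> lower_edges P\<close> \<open>b1 \<le> b\<close>] ab
        by (auto simp: R)
    qed
    finally show ?thesis .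
  qed
  then show ?thesis
    unfolding computes_def using wf_corner_protocol[OF P] by blast
qed

lemma geom_partition_singletons: "geom_partition n f ((\<lambda>x. {x}) ` (cube n \<times> cube n))"
proof -
  have "geom_rect n {(a, b)}" if "a \<in> cube n" "b \<in> cube n" for a b
    using that unfolding geom_rect_def cube_def
    by (intro exI[of _ a] exI[of _ b]) auto
  then show ?thesis
    unfolding geom_partition_def monochromatic_def by (auto simp: cube_def)
qed

lemma chi_geom_attained: "\<exists>P. geom_partition n f P \<and> card P = chi_geom n f"
  unfolding chi_geom_def by (rule LeastI_ex) (use geom_partition_singletons in blast)

lemma chi_geom_pos: "0 < chi_geom n f"
proof -
  obtain P where P: "geom_partition n f P" and "card P = chi_geom n f"
    using chi_geom_attained by blast
  have "\<Union> P = cube n \<times> cube n"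
    using P by (simp add: geom_partition_def)
  then have "(0, 0) \<in> \<Union> P"
    by (simp add: cube_def)
  then have "P \<noteq> {}" by blast
  moreover have "finite P"
    using P by (simp add: geom_partition_def)
  ultimately show ?thesis
    using \<open>card P = chi_geom n f\<close> by (metis card_gt_0_iff)
qed

lemma C_comp_le_depth: "computes n T f \<Longrightarrow> C_comp n f \<le> depth T"
  unfolding C_comp_def by (rule Least_le) blast

lemma C_comp_attained: "\<exists>T. computes n T f \<and> depth T = C_comp n f"
proof -
  have "computes n (corner_protocol f ((\<lambda>x. {x}) ` (cube n \<times> cube n))) f"
    by (rule corner_protocol_computes[OF geom_partition_singletons])
  then have "\<exists>d T. computes n T f \<and> depth T = d"
    by blast
  then show ?thesis
    unfolding C_comp_def by (rule LeastI_ex)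
qed

lemma chi_geom_le_exp_C_comp: "chi_geom n f \<le> 2 ^ C_comp n f"
proof -
  obtain T where "computes n T f" "depth T = C_comp n f"
    using C_comp_attained by blast
  then show ?thesis
    using chi_geom_le_exp_depth by metis
qed

lemma C_comp_le_double:
  assumes "chi_geom n f \<le> 2 ^ c"
  shows "C_comp n f \<le> 2 * c"
proof -
  obtain P where P: "geom_partition n f P" and "card P = chi_geom n f"
    using chi_geom_attained by blast
  then have "depth (corner_protocol f P) \<le> 2 * c"
    using assms by (intro depth_corner_protocol) (simp_all add: geom_partition_def)
  then show ?thesis
    using C_comp_le_depth[OF corner_protocol_computes[OF P]] by simp
qed

lemma le_exp_nat_ceiling_log2: "0 < k \<Longrightarrow> k \<le> 2 ^ nat \<lceil>log 2 (real k)\<rceil>"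
  by (meson less_log2_of_power linorder_not_le of_nat_ceiling)

theorem mainTheorem8:
  fixes n :: nat and f :: "nat \<Rightarrow> nat \<Rightarrow> bool"
  assumes "n \<ge> 1"
  shows "log 2 (real (chi_geom n f)) \<le> real (C_comp n f)
       \<and> real (C_comp n f) \<le> 2 * real_of_int \<lceil>log 2 (real (chi_geom n f))\<rceil>"
proof
  let ?l = "log 2 (real (chi_geom n f))"
  have pos: "0 < chi_geom n f"
    by (rule chi_geom_pos)
  show "?l \<le> real (C_comp n f)"
    using log2_of_power_le[OF chi_geom_le_exp_C_comp pos] .
  have "C_comp n f \<le> 2 * nat \<lceil>?l\<rceil>"
    using le_exp_nat_ceiling_log2[OF pos] by (rule C_comp_le_double)
  then have "real (C_comp n f) \<le> 2 * real (nat \<lceil>?l\<rceil>)"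
    by simp
  moreover have "real (nat \<lceil>?l\<rceil>) = real_of_int \<lceil>?l\<rceil>"
    using pos by simp
  ultimately show "real (C_comp n f) \<le> 2 * real_of_int \<lceil>?l\<rceil>"
    by simp
qed

end
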